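(* Let $X$ be a Banach space without the alternating Banach-Saks property. Then for every $\varepsilon>0$ there exists a map $f:\mathcal G(\mathbb N)\to X$ which is bi-Lipschitz onto its image with $\mathrm{Lip}(f)\cdot\mathrm{Lip}(f^{-1})<1+\varepsilon$. In particular, $(\mathcal G(\mathbb N),D)$ Lipschitz embeds into $X$.
   Context: $\mathcal G(\mathbb N)$ is the set of finite subsets of $\mathbb N$ with the metric $D(\bar n,\bar m)=|\bar n\,\Delta\,\bar m|$ (cardinality of the symmetric difference). $X$ has the alternating Banach-Saks property if every bounded sequence $(x_n)$ in $X$ has a subsequence $(x_{n_j})$ and signs $\varepsilon_j\in\{-1,1\}$ such that $(\frac1k\sum_{j=1}^k\varepsilon_jx_{n_j})_k$ converges in norm. $\mathrm{Lip}$ denotes the Lipschitz constant. *)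

theory Defs
  imports "HOL-Analysis.Analysis"
begin

definition GN :: "nat set set" where
  "GN = {A. finite A}"

definition Dsym :: "nat set \<Rightarrow> nat set \<Rightarrow> real" where
  "Dsym A B = real (card ((A - B) \<union> (B - A)))"

text \<open>Alternating Banach-Saks property of a (real) Banach space, given by its type.
  Averages are indexed by k = Suc n >= 1.\<close>
definition alternating_banach_saks :: "'a::banach itself \<Rightarrow> bool" where
  "alternating_banach_saks (_::'a itself) \<longleftrightarrow>
     (\<forall>x :: nat \<Rightarrow> 'a. bounded (range x) \<longrightarrow>
        (\<exists>r eps. strict_mono r \<and> (\<forall>j. eps j \<in> {-1, 1::real}) \<and>
           convergent (\<lambda>n. (1 / real (Suc n)) *\<^sub>R (\<Sum>j\<le>n. eps j *\<^sub>R x (r j)))))"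

definition lip_f :: "(nat set \<Rightarrow> 'a::real_normed_vector) \<Rightarrow> real" where
  "lip_f f = (SUP p\<in>{(A,B). A \<in> GN \<and> B \<in> GN \<and> A \<noteq> B}.
                 norm (f (fst p) - f (snd p)) / Dsym (fst p) (snd p))"

definition lip_finv :: "(nat set \<Rightarrow> 'a::real_normed_vector) \<Rightarrow> real" where
  "lip_finv f = (SUP p\<in>{(A,B). A \<in> GN \<and> B \<in> GN \<and> A \<noteq> B}.
                 Dsym (fst p) (snd p) / norm (f (fst p) - f (snd p)))"

definition bi_lipschitz_GN :: "(nat set \<Rightarrow> 'a::real_normed_vector) \<Rightarrow> bool" where
  "bi_lipschitz_GN f \<longleftrightarrow> inj_on f GN \<and>
     (\<exists>L. \<forall>A\<in>GN. \<forall>B\<in>GN. norm (f A - f B) \<le> L * Dsym A B) \<and>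
     (\<exists>L. \<forall>A\<in>GN. \<forall>B\<in>GN. Dsym A B \<le> L * norm (f A - f B))"

end

(*
  Fix a bounded sequence (x_i) in X no subsequence of which has norm-convergent signed averages,
  and call c admissible if, for every n, all signed sums of n terms far enough out have norm at
  least c n. If no c > 0 were admissible, concatenating blocks whose signed sums are ever smaller
  relative to their length, along a sufficiently slow schedule of lengths, would give a
  subsequence and signs whose averages tend to 0. So let gamma > 0 be the supremum of the
  admissible constants and p a length at which gamma + eta is not admissible. Normalised blocks of
  p far-out terms with signed sums of norm below (gamma + eta) p form a sequence (y_j) in the unit
  ball with ||sum_{j in G} +-y_j|| >= (1 - tau) |G| for every Schreier set G (|G| <= min G): the
  union of the blocks indexed by G is one far-out signed sum of |G| p terms, of norm at least
  (gamma - eta) |G| p.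
  Finally A |-> sum_{i in A} y_(K (i + 1)) is 1-Lipschitz for D, and for K >= 1/tau all but
  tau |A Delta B| of the indices in A Delta B are dilated into a Schreier set, so distances shrink
  at most by the factor 1 - 3 tau.
*)

theory Submission
  imports Defs
begin

section \<open>Lower estimates on Schreier sets and the embedding of \<open>G(\<nat>)\<close>\<close>

abbreviation signs_on :: "(nat \<Rightarrow> real) \<Rightarrow> nat set \<Rightarrow> bool" where
  "signs_on \<epsilon> F \<equiv> \<forall>i\<in>F. \<epsilon> i \<in> {-1, 1}"

definition schreier_set :: "nat set \<Rightarrow> bool" where
  "schreier_set G \<longleftrightarrow> finite G \<and> (\<forall>j\<in>G. card G \<le> j)"

definition schreier_lower_bound :: "(nat \<Rightarrow> 'a::real_normed_vector) \<Rightarrow> real \<Rightarrow> bool" where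
  "schreier_lower_bound y \<rho> \<longleftrightarrow>
     (\<forall>G s. schreier_set G \<longrightarrow> signs_on s G \<longrightarrow> \<rho> * card G \<le> norm (\<Sum>j\<in>G. s j *\<^sub>R y j))"

lemma norm_signed_sum_le:
  fixes y :: "nat \<Rightarrow> 'a::real_normed_vector"
  assumes "\<And>i. i \<in> F \<Longrightarrow> norm (y i) \<le> M" and "signs_on s F"
  shows "norm (\<Sum>i\<in>F. s i *\<^sub>R y i) \<le> M * card F"
proof -
  have "norm (\<Sum>i\<in>F. s i *\<^sub>R y i) \<le> (\<Sum>i\<in>F. norm (s i *\<^sub>R y i))"
    by (rule norm_sum)
  also have "\<dots> \<le> (\<Sum>i\<in>F. M)"
    using assms by (intro sum_mono) auto
  finally show ?thesis
    by (simp add: mult.commute)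
qed

lemma sum_diff_eq_signed_sum_symdiff:
  fixes g :: "'b \<Rightarrow> 'a::real_vector"
  assumes "finite A" "finite B"
  shows "(\<Sum>i\<in>A. g i) - (\<Sum>i\<in>B. g i) =
    (\<Sum>i\<in>sym_diff A B. (if i \<in> A then 1 else -1) *\<^sub>R g i)"
proof -
  have "(\<Sum>i\<in>A. g i) = (\<Sum>i\<in>A - B. g i) + (\<Sum>i\<in>A \<inter> B. g i)"
    using assms by (metis Diff_Diff_Int Diff_subset add.commute sum.subset_diff)
  moreover have "(\<Sum>i\<in>B. g i) = (\<Sum>i\<in>B - A. g i) + (\<Sum>i\<in>A \<inter> B. g i)"
    using assms by (metis Diff_Diff_Int Diff_subset add.commute sum.subset_diff Int_commute)
  moreover have "(\<Sum>i\<in>sym_diff A B. (if i \<in> A then 1 else -1) *\<^sub>R g i)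
      = (\<Sum>i\<in>A - B. g i) - (\<Sum>i\<in>B - A. g i)"
    using assms by (subst sum.union_disjoint) (auto simp: sum_negf)
  ultimately show ?thesis
    by simp
qed

lemma schreier_lower_bound_mono:
  "schreier_lower_bound y \<rho> \<Longrightarrow> \<rho>' \<le> \<rho> \<Longrightarrow> schreier_lower_bound y \<rho>'"
  unfolding schreier_lower_bound_def by (meson mult_right_mono of_nat_0_le_iff order_trans)

lemma schreier_lower_bound_reindex:
  assumes "schreier_lower_bound y \<rho>" "inj_on g S" "schreier_set (g ` S)" "signs_on s S"
  shows "\<rho> * card S \<le> norm (\<Sum>i\<in>S. s i *\<^sub>R y (g i))"
proof -
  define s' where "s' = s \<circ> inv_into S g"
  have "signs_on s' (g ` S)"
    using assms(2,4) by (auto simp: s'_def)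
  then have "\<rho> * card (g ` S) \<le> norm (\<Sum>j\<in>g ` S. s' j *\<^sub>R y j)"
    using assms(1,3) unfolding schreier_lower_bound_def by blast
  then show ?thesis
    using assms(2) by (simp add: sum.reindex card_image s'_def)
qed

lemma schreier_set_dilation:
  fixes K d :: nat
  assumes "finite S" "\<And>i. i \<in> S \<Longrightarrow> d \<le> i" "card S \<le> K * (d + 1)"
  shows "schreier_set ((\<lambda>i. K * (i + 1)) ` S)"
  unfolding schreier_set_def
proof (intro conjI ballI)
  fix j assume "j \<in> (\<lambda>i. K * (i + 1)) ` S"
  then obtain i where "i \<in> S" "j = K * (i + 1)"
    by blast
  then have "K * (d + 1) \<le> j"
    using assms(2) by simp
  moreover have "card ((\<lambda>i. K * (i + 1)) ` S) \<le> card S"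
    by (rule card_image_le) fact
  ultimately show "card ((\<lambda>i. K * (i + 1)) ` S) \<le> j"
    using assms(3) by linarith
qed (use assms(1) in auto)

lemma norm_signed_sum_subset_ge:
  fixes y :: "nat \<Rightarrow> 'a::real_normed_vector"
  assumes "T \<subseteq> S" "finite S" "\<And>i. i \<in> S \<Longrightarrow> norm (y i) \<le> 1" "signs_on s S"
  shows "norm (\<Sum>i\<in>T. s i *\<^sub>R y i) - card (S - T) \<le> norm (\<Sum>i\<in>S. s i *\<^sub>R y i)"
proof -
  have "norm (\<Sum>i\<in>T. s i *\<^sub>R y i) - card (S - T)
      \<le> norm (\<Sum>i\<in>T. s i *\<^sub>R y i) - norm (\<Sum>i\<in>S - T. s i *\<^sub>R y i)"
    using norm_signed_sum_le[of "S - T" y 1 s] assms(3,4) by auto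
  also have "\<dots> \<le> norm ((\<Sum>i\<in>T. s i *\<^sub>R y i) + (\<Sum>i\<in>S - T. s i *\<^sub>R y i))"
    by (rule norm_diff_ineq)
  also have "\<dots> = norm (\<Sum>i\<in>S. s i *\<^sub>R y i)"
    by (simp add: sum.subset_diff[OF assms(1,2)] add.commute)
  finally show ?thesis .
qed

lemma dilated_signed_sum_lower_bound:
  fixes y :: "nat \<Rightarrow> 'a::real_normed_vector"
  assumes y_le: "\<And>j. norm (y j) \<le> 1" and y_low: "schreier_lower_bound y (1 - \<tau>)"
    and "\<tau> > 0" and K: "1 \<le> real K * \<tau>" and "finite S" "signs_on s S"
  shows "(1 - 3 * \<tau>) * card S \<le> norm (\<Sum>i\<in>S. s i *\<^sub>R y (K * (i + 1)))"
proof -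
  define n where "n = card S"
  define d where "d = nat \<lfloor>\<tau> * n\<rfloor>"
  have d_le: "real d \<le> \<tau> * n" and d_gt: "\<tau> * n < real d + 1"
    using \<open>\<tau> > 0\<close> by (auto simp: d_def)
  \<comment> \<open>The at most \<open>\<tau> n\<close> indices below \<open>d\<close> are discarded; the dilation maps the others
    to a Schreier set.\<close>
  define T where "T = {i\<in>S. d \<le> i}"
  have "T \<subseteq> S" "finite T"
    using \<open>finite S\<close> by (auto simp: T_def)
  have card_T: "real (card T) + card (S - T) = n"
    using card_Diff_subset[OF \<open>finite T\<close> \<open>T \<subseteq> S\<close>] card_mono[OF \<open>finite S\<close> \<open>T \<subseteq> S\<close>]
    unfolding n_def by (simp flip: of_nat_add)
  have "card (S - T) \<le> card {..<d}"
    by (intro card_mono) (auto simp: T_def)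
  then have small: "real (card (S - T)) \<le> \<tau> * n"
    using d_le by simp
  have "real n \<le> real K * \<tau> * n"
    using K by (simp add: mult_le_cancel_right1)
  also have "\<dots> \<le> real K * (real d + 1)"
    using d_gt by (simp add: mult.assoc mult_left_mono)
  finally have "card T \<le> K * (d + 1)"
    using card_T by (metis add_leE of_nat_1 of_nat_add of_nat_le_iff of_nat_mult)
  then have "schreier_set ((\<lambda>i. K * (i + 1)) ` T)"
    using \<open>finite T\<close> by (intro schreier_set_dilation) (auto simp: T_def)
  moreover have "K > 0"
    using K by (cases K) auto
  then have "inj_on (\<lambda>i. K * (i + 1)) T"
    by (auto simp: inj_on_def)
  ultimately have "(1 - \<tau>) * card T \<le> norm (\<Sum>i\<in>T. s i *\<^sub>R y (K * (i + 1)))"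
    using \<open>T \<subseteq> S\<close> \<open>signs_on s S\<close> by (intro schreier_lower_bound_reindex[OF y_low]) auto
  moreover have "norm (\<Sum>i\<in>T. s i *\<^sub>R y (K * (i + 1))) - card (S - T) \<le> norm (\<Sum>i\<in>S. s i *\<^sub>R y (K * (i + 1)))"
    using \<open>T \<subseteq> S\<close> \<open>finite S\<close> y_le \<open>signs_on s S\<close> by (intro norm_signed_sum_subset_ge) auto
  moreover have "\<tau> * card T + \<tau> * card (S - T) = \<tau> * n" "0 \<le> \<tau> * card (S - T)"
    using card_T \<open>\<tau> > 0\<close> by (simp_all flip: distrib_left)
  ultimately show ?thesis
    using card_T small unfolding n_def by (simp add: algebra_simps)
qed

lemma cSUP_nonneg_le:
  fixes g :: "'b \<Rightarrow> real"
  assumes "P \<noteq> {}" "\<And>p. p \<in> P \<Longrightarrow> 0 \<le> g p \<and> g p \<le> C"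
  shows "0 \<le> (SUP p\<in>P. g p) \<and> (SUP p\<in>P. g p) \<le> C"
proof
  obtain p where "p \<in> P"
    using assms(1) by blast
  moreover have "bdd_above (g ` P)"
    using assms(2) by (intro bdd_aboveI2) blast
  ultimately show "0 \<le> (SUP p\<in>P. g p)"
    using assms(2) by (meson cSUP_upper order_trans)
  show "(SUP p\<in>P. g p) \<le> C"
    using assms by (intro cSUP_least) auto
qed

lemma Dsym_pos:
  assumes "A \<in> GN" "B \<in> GN" "A \<noteq> B"
  shows "Dsym A B > 0"
proof -
  have "sym_diff A B \<noteq> {}" "finite (sym_diff A B)"
    using assms by (auto simp: GN_def)
  then show ?thesis
    by (simp add: Dsym_def card_gt_0_iff)
qed

lemma distinct_GN_pairs_nonempty: "{(A, B). A \<in> GN \<and> B \<in> GN \<and> A \<noteq> B} \<noteq> {}"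
proof -
  have "({0}, {}) \<in> {(A, B). A \<in> GN \<and> B \<in> GN \<and> A \<noteq> B}"
    by (simp add: GN_def)
  then show ?thesis
    by blast
qed

lemma lip_f_le:
  assumes upper: "\<And>A B. A \<in> GN \<Longrightarrow> B \<in> GN \<Longrightarrow> norm (f A - f B) \<le> C * Dsym A B"
  shows "0 \<le> lip_f f \<and> lip_f f \<le> C"
  unfolding lip_f_def
proof (rule cSUP_nonneg_le)
  show "{(A, B). A \<in> GN \<and> B \<in> GN \<and> A \<noteq> B} \<noteq> {}"
    by (rule distinct_GN_pairs_nonempty)
  fix p assume "p \<in> {(A, B). A \<in> GN \<and> B \<in> GN \<and> A \<noteq> B}"
  then obtain A B where "p = (A, B)" "A \<in> GN" "B \<in> GN" "Dsym A B > 0"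
    using Dsym_pos by auto
  moreover from this have "norm (f A - f B) \<le> C * Dsym A B"
    using upper by auto
  ultimately show "0 \<le> norm (f (fst p) - f (snd p)) / Dsym (fst p) (snd p)
      \<and> norm (f (fst p) - f (snd p)) / Dsym (fst p) (snd p) \<le> C"
    by (simp add: divide_le_eq)
qed

lemma lip_finv_le:
  assumes "c > 0" and lower: "\<And>A B. A \<in> GN \<Longrightarrow> B \<in> GN \<Longrightarrow> c * Dsym A B \<le> norm (f A - f B)"
  shows "0 \<le> lip_finv f \<and> lip_finv f \<le> 1 / c"
  unfolding lip_finv_def
proof (rule cSUP_nonneg_le)
  show "{(A, B). A \<in> GN \<and> B \<in> GN \<and> A \<noteq> B} \<noteq> {}"
    by (rule distinct_GN_pairs_nonempty)
  fix p assume "p \<in> {(A, B). A \<in> GN \<and> B \<in> GN \<and> A \<noteq> B}"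
  then obtain A B where "p = (A, B)" "A \<in> GN" "B \<in> GN" "Dsym A B > 0"
    using Dsym_pos by auto
  moreover from this have "c * Dsym A B \<le> norm (f A - f B)" "c * Dsym A B > 0"
    using lower \<open>c > 0\<close> by auto
  ultimately show "0 \<le> Dsym (fst p) (snd p) / norm (f (fst p) - f (snd p))
      \<and> Dsym (fst p) (snd p) / norm (f (fst p) - f (snd p)) \<le> 1 / c"
    using \<open>c > 0\<close> by (simp add: divide_le_eq le_divide_eq mult.commute)
qed

lemma bi_lipschitz_GN_two_sided:
  fixes f :: "nat set \<Rightarrow> 'a::real_normed_vector"
  assumes "c > 0"
    and lower: "\<And>A B. A \<in> GN \<Longrightarrow> B \<in> GN \<Longrightarrow> c * Dsym A B \<le> norm (f A - f B)"
    and upper: "\<And>A B. A \<in> GN \<Longrightarrow> B \<in> GN \<Longrightarrow> norm (f A - f B) \<le> C * Dsym A B"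
  shows "bi_lipschitz_GN f \<and> lip_f f * lip_finv f \<le> C / c"
proof
  have "lip_f f * lip_finv f \<le> C * (1 / c)"
    using lip_f_le[OF upper] lip_finv_le[OF \<open>c > 0\<close> lower] by (intro mult_mono) auto
  then show "lip_f f * lip_finv f \<le> C / c"
    by simp
  have "inj_on f GN"
  proof (rule inj_onI, rule ccontr)
    fix A B assume "A \<in> GN" "B \<in> GN" "f A = f B" "A \<noteq> B"
    then have "c * Dsym A B \<le> 0" and "c * Dsym A B > 0"
      using lower[of A B] Dsym_pos[of A B] \<open>c > 0\<close> by simp_all
    then show False
      by simp
  qed
  moreover have "Dsym A B \<le> (1 / c) * norm (f A - f B)" if "A \<in> GN" "B \<in> GN" for A B
    using lower[OF that] \<open>c > 0\<close> by (simp add: field_simps)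
  ultimately show "bi_lipschitz_GN f"
    unfolding bi_lipschitz_GN_def using upper by blast
qed

lemma embedding_of_schreier_lower_bound:
  fixes y :: "nat \<Rightarrow> 'a::real_normed_vector"
  assumes "\<And>j. norm (y j) \<le> 1" "schreier_lower_bound y (1 - \<tau>)" "\<tau> > 0" "3 * \<tau> < 1"
  shows "\<exists>f :: nat set \<Rightarrow> 'a. bi_lipschitz_GN f \<and> lip_f f * lip_finv f \<le> 1 / (1 - 3 * \<tau>)"
proof -
  obtain K :: nat where "1 / \<tau> \<le> K"
    using real_arch_simple by blast
  then have K: "1 \<le> real K * \<tau>"
    using \<open>\<tau> > 0\<close> by (simp add: divide_le_eq)
  define f where "f A = (\<Sum>i\<in>A. y (K * (i + 1)))" for A
  have difference: "f A - f B = (\<Sum>i\<in>sym_diff A B. (if i \<in> A then 1 else -1) *\<^sub>R y (K * (i + 1)))"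
    and finite_sym_diff: "finite (sym_diff A B)" if "A \<in> GN" "B \<in> GN" for A B
    using that unfolding f_def GN_def by (auto intro: sum_diff_eq_signed_sum_symdiff)
  have "(1 - 3 * \<tau>) * Dsym A B \<le> norm (f A - f B)" if "A \<in> GN" "B \<in> GN" for A B
    unfolding difference[OF that] Dsym_def
    using that assms finite_sym_diff by (intro dilated_signed_sum_lower_bound[OF _ _ _ K]) auto
  moreover have "norm (f A - f B) \<le> 1 * Dsym A B" if "A \<in> GN" "B \<in> GN" for A B
    unfolding difference[OF that] Dsym_def
    using norm_signed_sum_le[of "sym_diff A B" "\<lambda>i. y (K * (i + 1))" 1] assms(1) by simp
  ultimately have "bi_lipschitz_GN f \<and> lip_f f * lip_finv f \<le> 1 / (1 - 3 * \<tau>)"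
    using \<open>3 * \<tau> < 1\<close> by (intro bi_lipschitz_GN_two_sided) auto
  then show ?thesis
    by blast
qed

section \<open>Sequences of consecutive blocks\<close>

lemma enumerate_image_atMost:
  fixes U :: "nat set"
  assumes "infinite U"
  shows "enumerate U ` {..n} = U \<inter> {..<enumerate U (Suc n)}"
proof (intro equalityI subsetI)
  fix i assume "i \<in> enumerate U ` {..n}"
  then show "i \<in> U \<inter> {..<enumerate U (Suc n)}"
    using assms by (auto simp: enumerate_in_set)
next
  fix i assume i: "i \<in> U \<inter> {..<enumerate U (Suc n)}"
  then obtain j where "enumerate U j = i"
    using enumerate_Ex[OF assms] by blast
  then show "i \<in> enumerate U ` {..n}"
    using i assms by auto
qed

text \<open>\<open>F t m\<close> is a candidate for block \<open>t\<close> lying in \<open>{m..}\<close>; block \<open>t\<close> is the candidate placed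
  right after block \<open>t - 1\<close>, but no earlier than \<open>W t\<close>.\<close>

primrec block_start :: "(nat \<Rightarrow> nat \<Rightarrow> nat set) \<Rightarrow> (nat \<Rightarrow> nat) \<Rightarrow> nat \<Rightarrow> nat" where
  "block_start F W 0 = W 0"
| "block_start F W (Suc t) = max (Suc (Max (F t (block_start F W t)))) (W (Suc t))"

declare block_start.simps(2) [simp del]

locale block_sequence =
  fixes F :: "nat \<Rightarrow> nat \<Rightarrow> nat set" and W :: "nat \<Rightarrow> nat"
  assumes F_subset: "F t m \<subseteq> {m..}" and finite_F: "finite (F t m)" and F_nonempty: "F t m \<noteq> {}"
begin

abbreviation start :: "nat \<Rightarrow> nat" where
  "start \<equiv> block_start F W"

abbreviation block :: "nat \<Rightarrow> nat set" where
  "block t \<equiv> F t (start t)"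

lemma W_le_start: "W t \<le> start t"
  by (cases t) (auto simp: block_start.simps(2))

lemma block_subset: "block t \<subseteq> {start t..<start (Suc t)}"
proof
  fix i assume i: "i \<in> block t"
  have "i \<le> Max (block t)"
    using i finite_F by simp
  moreover have "start t \<le> i"
    using i F_subset[of t "start t"] by auto
  ultimately
  show "i \<in> {start t..<start (Suc t)}"
    by (auto simp: block_start.simps(2))
qed

lemma strict_mono_start: "strict_mono start"
proof (rule strict_mono_Suc_iff[THEN iffD2], intro allI)
  fix t
  obtain i where "i \<in> block t"
    using F_nonempty by blast
  then show "start t < start (Suc t)"
    using block_subset by fastforce
qed

lemma start_mono: "s \<le> t \<Longrightarrow> start s \<le> start t"
  using strict_mono_start strict_mono_less_eq by blast

lemma start_le_of_mem_block: "i \<in> block t \<Longrightarrow> start t \<le> i"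
  and less_start_Suc_of_mem_block: "i \<in> block t \<Longrightarrow> i < start (Suc t)"
  using block_subset[of t] by auto

lemma block_disjoint: "s \<noteq> t \<Longrightarrow> block s \<inter> block t = {}"
proof -
  have *: "block s \<inter> block t = {}" if "s < t" for s t
  proof -
    have "start (Suc s) \<le> start t"
      using start_mono that by simp
    then show ?thesis
      using block_subset[of s] block_subset[of t] by fastforce
  qed
  show "s \<noteq> t \<Longrightarrow> block s \<inter> block t = {}"
    using *[of s t] *[of t s] by (cases "s < t") auto
qed

definition block_of :: "nat \<Rightarrow> nat" where
  "block_of i = (LEAST t. i < start (Suc t))"

lemma block_of_eq: "i \<in> block t \<Longrightarrow> block_of i = t"
  unfolding block_of_def
proof (rule Least_equality)
  assume i: "i \<in> block t"
  then show "i < start (Suc t)"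
    by (rule less_start_Suc_of_mem_block)
  show "t \<le> s" if "i < start (Suc s)" for s
  proof (rule ccontr)
    assume "\<not> t \<le> s"
    then have "start (Suc s) \<le> start t"
      using start_mono by simp
    then show False
      using that start_le_of_mem_block[OF i] by simp
  qed
qed

lemma less_start_Suc_block_of: "i < start (Suc (block_of i))"
  unfolding block_of_def
proof (rule LeastI)
  show "i < start (Suc i)"
    using strict_mono_imp_increasing[OF strict_mono_start, of "Suc i"] by simp
qed

lemma start_block_of_le:
  assumes "W 0 \<le> i"
  shows "start (block_of i) \<le> i"
proof (cases "block_of i")
  case 0
  then show ?thesis
    using assms by simp
next
  case (Suc t)
  have "\<not> i < start (Suc t)"
  proof
    assume "i < start (Suc t)"
    then have "block_of i \<le> t"
      unfolding block_of_def by (rule Least_le)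
    then show False
      using Suc by simp
  qed
  then show ?thesis
    using Suc by simp
qed

lemma blocks_below:
  assumes "W 0 \<le> q"
  shows "(\<Union>t. block t) \<inter> {..<q} = (\<Union>t<block_of q. block t) \<union> (block (block_of q) \<inter> {..<q})"
proof (intro equalityI subsetI)
  fix i assume "i \<in> (\<Union>t. block t) \<inter> {..<q}"
  then obtain t where t: "i \<in> block t" "i < q"
    by blast
  have "\<not> block_of q < t"
  proof
    assume "block_of q < t"
    then have "start (Suc (block_of q)) \<le> start t"
      using start_mono by simp
    then show False
      using less_start_Suc_block_of[of q] start_le_of_mem_block[OF t(1)] t(2) by simp
  qed
  then show "i \<in> (\<Union>t<block_of q. block t) \<union> (block (block_of q) \<inter> {..<q})"
    using t by (cases "t = block_of q") auto
next
  fix i assume i: "i \<in> (\<Union>t<block_of q. block t) \<union> (block (block_of q) \<inter> {..<q})"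
  have "i < q" if "t < block_of q" "i \<in> block t" for t
    using that start_mono[of "Suc t" "block_of q"] less_start_Suc_of_mem_block[of i t] start_block_of_le[OF assms]
    by simp
  then show "i \<in> (\<Union>t. block t) \<inter> {..<q}"
    using i by blast
qed

lemma card_UN_blocks:
  "finite G \<Longrightarrow> card (\<Union>t\<in>G. block t) = (\<Sum>t\<in>G. card (block t))"
  using finite_F block_disjoint by (intro card_UN_disjoint) auto

lemma sum_UN_blocks:
  fixes x :: "nat \<Rightarrow> 'a::real_normed_vector"
  assumes "finite G"
  shows "(\<Sum>t\<in>G. s t *\<^sub>R (\<Sum>i\<in>block t. E t i *\<^sub>R x i))
    = (\<Sum>i\<in>(\<Union>t\<in>G. block t). (s (block_of i) * E (block_of i) i) *\<^sub>R x i)"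
proof -
  have "(\<Sum>t\<in>G. s t *\<^sub>R (\<Sum>i\<in>block t. E t i *\<^sub>R x i))
      = (\<Sum>t\<in>G. \<Sum>i\<in>block t. (s (block_of i) * E (block_of i) i) *\<^sub>R x i)"
    by (intro sum.cong refl) (simp add: scaleR_sum_right block_of_eq)
  also have "\<dots> = (\<Sum>i\<in>(\<Union>t\<in>G. block t). (s (block_of i) * E (block_of i) i) *\<^sub>R x i)"
    using assms finite_F block_disjoint by (intro sum.UNION_disjoint[symmetric]) auto
  finally show ?thesis .
qed

lemma schreier_sum_of_blocks_ge:
  fixes x :: "nat \<Rightarrow> 'a::real_normed_vector" and lo :: real
  assumes card_block: "\<And>t. card (block t) = p" and signs: "\<And>t. signs_on (E t) (block t)"
    and tail: "\<And>k U \<sigma>. U \<subseteq> {W k..} \<Longrightarrow> card U = k * p \<Longrightarrow> signs_on \<sigma> U \<Longrightarrow>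
      lo * (k * p) \<le> norm (\<Sum>i\<in>U. \<sigma> i *\<^sub>R x i)"
    and G: "schreier_set G" "signs_on s G"
  shows "lo * (card G * p) \<le> norm (\<Sum>j\<in>G. s j *\<^sub>R (\<Sum>i\<in>block j. E j i *\<^sub>R x i))"
proof -
  define U where "U = (\<Union>j\<in>G. block j)"
  have "finite G"
    using G(1) by (simp add: schreier_set_def)
  have "U \<subseteq> {W (card G)..}"
  proof
    fix i assume "i \<in> U"
    then obtain j where "j \<in> G" "i \<in> block j"
      by (auto simp: U_def)
    then show "i \<in> {W (card G)..}"
      using G(1) W_le_start[of "card G"] start_mono[of "card G" j] start_le_of_mem_block[of i j]
      by (auto simp: schreier_set_def)
  qed
  moreover have "card U = card G * p"
    using card_UN_blocks[OF \<open>finite G\<close>] card_block by (simp add: U_def)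
  moreover have "signs_on (\<lambda>i. s (block_of i) * E (block_of i) i) U"
  proof
    fix i assume "i \<in> U"
    then obtain j where "j \<in> G" "i \<in> block j"
      by (auto simp: U_def)
    then have "s j \<in> {-1, 1}" "E j i \<in> {-1, 1}"
      using G(2) signs by auto
    then show "s (block_of i) * E (block_of i) i \<in> {-1, 1}"
      using block_of_eq[OF \<open>i \<in> block j\<close>] by auto
  qed
  ultimately have "lo * (card G * p) \<le> norm (\<Sum>i\<in>U. (s (block_of i) * E (block_of i) i) *\<^sub>R x i)"
    by (rule tail)
  then show ?thesis
    using sum_UN_blocks[OF \<open>finite G\<close>, of s E x] by (simp add: U_def)
qed

lemma le_block_of: "start t \<le> q \<Longrightarrow> t \<le> block_of q"
proof (rule ccontr)
  assume "start t \<le> q" "\<not> t \<le> block_of q"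
  then have "start (Suc (block_of q)) \<le> start t"
    using start_mono by simp
  then show False
    using less_start_Suc_block_of[of q] \<open>start t \<le> q\<close> by simp
qed

lemma infinite_UN_blocks: "infinite (\<Union>t. block t)"
  unfolding infinite_nat_iff_unbounded_le
proof
  fix m
  obtain i where "i \<in> block m"
    using F_nonempty by blast
  moreover have "m \<le> start m"
    using strict_mono_imp_increasing[OF strict_mono_start] .
  ultimately show "\<exists>i\<ge>m. i \<in> (\<Union>t. block t)"
    using start_le_of_mem_block[of i m] by (intro exI[of _ i]) auto
qed

lemma sum_blocks_below:
  assumes "W 0 \<le> q"
  shows "(\<Sum>i\<in>(\<Union>t. block t) \<inter> {..<q}. g i)
    = (\<Sum>t<block_of q. \<Sum>i\<in>block t. g i) + (\<Sum>i\<in>block (block_of q) \<inter> {..<q}. g i)"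
proof -
  have "block t \<inter> block (block_of q) = {}" if "t < block_of q" for t
    using block_disjoint that by simp
  then have "(\<Union>t<block_of q. block t) \<inter> (block (block_of q) \<inter> {..<q}) = {}"
    by blast
  then have "(\<Sum>i\<in>(\<Union>t. block t) \<inter> {..<q}. g i)
      = (\<Sum>i\<in>(\<Union>t<block_of q. block t). g i) + (\<Sum>i\<in>block (block_of q) \<inter> {..<q}. g i)"
    unfolding blocks_below[OF assms] using finite_F by (intro sum.union_disjoint) auto
  also have "(\<Sum>i\<in>(\<Union>t<block_of q. block t). g i) = (\<Sum>t<block_of q. \<Sum>i\<in>block t. g i)"
    using finite_F block_disjoint by (intro sum.UNION_disjoint) auto
  finally show ?thesis .
qed

lemma enumerate_blocks_estimates:
  fixes x :: "nat \<Rightarrow> 'a::real_normed_vector"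
  assumes "W 0 = 0" "\<And>i. norm (x i) \<le> M" "\<And>t. signs_on (E t) (block t)"
  defines "r \<equiv> enumerate (\<Union>t. block t)"
  shows "norm (\<Sum>j\<le>n. E (block_of (r j)) (r j) *\<^sub>R x (r j))
      \<le> (\<Sum>t<block_of (r (Suc n)). norm (\<Sum>i\<in>block t. E t i *\<^sub>R x i))
        + M * card (block (block_of (r (Suc n))))" (is "?norm \<le> _")
    and "(\<Sum>t<block_of (r (Suc n)). card (block t)) \<le> Suc n"
proof -
  let ?U = "\<Union>t. block t" and ?q = "r (Suc n)"
  let ?b = "block_of ?q"
  have "M \<ge> 0"
    using assms(2)[of 0] norm_ge_zero order_trans by blast
  have "W 0 \<le> ?q"
    using assms(1) by simp
  have "inj_on r {..n}"
    unfolding r_def using strict_mono_enumerate[OF infinite_UN_blocks] strict_mono_imp_inj_on by blast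
  then have reindex: "(\<Sum>j\<le>n. g (r j)) = (\<Sum>i\<in>?U \<inter> {..<?q}. g i)" for g :: "nat \<Rightarrow> 'b::comm_monoid_add"
    unfolding r_def enumerate_image_atMost[OF infinite_UN_blocks, symmetric] by (simp add: sum.reindex r_def)
  have "(\<Sum>t<?b. \<Sum>i\<in>block t. E (block_of i) i *\<^sub>R x i) = (\<Sum>t<?b. \<Sum>i\<in>block t. E t i *\<^sub>R x i)"
    and "(\<Sum>i\<in>block ?b \<inter> {..<?q}. E (block_of i) i *\<^sub>R x i) = (\<Sum>i\<in>block ?b \<inter> {..<?q}. E ?b i *\<^sub>R x i)"
    by (intro sum.cong refl; auto simp: block_of_eq)+
  then have "(\<Sum>j\<le>n. E (block_of (r j)) (r j) *\<^sub>R x (r j))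
      = (\<Sum>t<?b. \<Sum>i\<in>block t. E t i *\<^sub>R x i) + (\<Sum>i\<in>block ?b \<inter> {..<?q}. E ?b i *\<^sub>R x i)"
    unfolding reindex[of "\<lambda>i. E (block_of i) i *\<^sub>R x i"] sum_blocks_below[OF \<open>W 0 \<le> ?q\<close>] by simp
  then have "?norm \<le> norm (\<Sum>t<?b. \<Sum>i\<in>block t. E t i *\<^sub>R x i) + norm (\<Sum>i\<in>block ?b \<inter> {..<?q}. E ?b i *\<^sub>R x i)"
    by (simp add: norm_triangle_ineq)
  also have "\<dots> \<le> (\<Sum>t<?b. norm (\<Sum>i\<in>block t. E t i *\<^sub>R x i)) + M * card (block ?b \<inter> {..<?q})"
    using assms(2,3) by (intro add_mono norm_sum norm_signed_sum_le) auto
  also have "M * card (block ?b \<inter> {..<?q}) \<le> M * card (block ?b)"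
    using \<open>M \<ge> 0\<close> finite_F by (intro mult_left_mono) (auto intro: card_mono)
  finally show "?norm \<le> (\<Sum>t<?b. norm (\<Sum>i\<in>block t. E t i *\<^sub>R x i)) + M * card (block ?b)"
    by simp
  have "card (?U \<inter> {..<?q}) = Suc n"
    using reindex[of "\<lambda>_. 1::nat"] by simp
  then show "(\<Sum>t<?b. card (block t)) \<le> Suc n"
    using sum_blocks_below[OF \<open>W 0 \<le> ?q\<close>, of "\<lambda>_. 1::nat"] by simp
qed

lemma filterlim_block_of_enumerate:
  "filterlim (\<lambda>n. block_of (enumerate (\<Union>t. block t) (Suc n))) at_top sequentially"
  unfolding filterlim_at_top eventually_sequentially
proof
  fix t
  have "start t \<le> enumerate (\<Union>t. block t) (Suc n)" if "start t \<le> n" for n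
    using le_enumerate[OF infinite_UN_blocks, of "Suc n"] that by simp
  then show "\<exists>n0. \<forall>n\<ge>n0. t \<le> block_of (enumerate (\<Union>t. block t) (Suc n))"
    using le_block_of by blast
qed

lemma signs_on_enumerate_blocks:
  assumes "\<And>t. signs_on (E t) (block t)"
  shows "E (block_of (enumerate (\<Union>t. block t) j)) (enumerate (\<Union>t. block t) j) \<in> {-1, 1}"
proof -
  obtain t where "enumerate (\<Union>t. block t) j \<in> block t"
    using enumerate_in_set[OF infinite_UN_blocks] by blast
  then show ?thesis
    using assms block_of_eq by auto
qed

lemma enumerate_blocks_averages_tendsto_zero:
  fixes x :: "nat \<Rightarrow> 'a::real_normed_vector" and M :: real
  assumes "W 0 = 0" "\<And>i. norm (x i) \<le> M" "\<And>t. signs_on (E t) (block t)"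
    and block_le: "\<And>t. norm (\<Sum>i\<in>block t. E t i *\<^sub>R x i) \<le> b t"
    and small: "\<And>\<epsilon>. \<epsilon> > 0 \<Longrightarrow> eventually (\<lambda>t. (\<Sum>s<t. b s) + M * real (card (block t))
      \<le> \<epsilon> * real (\<Sum>s<t. card (block s))) sequentially"
  defines "r \<equiv> enumerate (\<Union>t. block t)"
  shows "(\<lambda>n. (1 / real (Suc n)) *\<^sub>R (\<Sum>j\<le>n. E (block_of (r j)) (r j) *\<^sub>R x (r j))) \<longlonglongrightarrow> 0"
proof (rule tendsto_iff[THEN iffD2], intro allI impI)
  fix \<epsilon> :: real assume "\<epsilon> > 0"
  then have "\<epsilon> / 2 > 0"
    by simp
  have "eventually (\<lambda>n. (\<Sum>s<block_of (r (Suc n)). b s) + M * real (card (block (block_of (r (Suc n)))))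
      \<le> \<epsilon> / 2 * real (\<Sum>s<block_of (r (Suc n)). card (block s))) sequentially"
    unfolding r_def by (rule eventually_compose_filterlim[OF small[OF \<open>\<epsilon> / 2 > 0\<close>] filterlim_block_of_enumerate])
  then show "eventually (\<lambda>n. dist ((1 / real (Suc n)) *\<^sub>R (\<Sum>j\<le>n. E (block_of (r j)) (r j) *\<^sub>R x (r j))) 0 < \<epsilon>)
    sequentially"
  proof eventually_elim
    case (elim n)
    define t where "t = block_of (r (Suc n))"
    have "norm (\<Sum>j\<le>n. E (block_of (r j)) (r j) *\<^sub>R x (r j))
        \<le> (\<Sum>s<t. norm (\<Sum>i\<in>block s. E s i *\<^sub>R x i)) + M * card (block t)"
      using enumerate_blocks_estimates(1)[OF assms(1-3), where n = n] unfolding t_def r_def .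
    also have "\<dots> \<le> (\<Sum>s<t. b s) + M * card (block t)"
      using block_le by (simp add: sum_mono)
    also have "\<dots> \<le> \<epsilon> / 2 * real (\<Sum>s<t. card (block s))"
      using elim unfolding t_def .
    also have "\<dots> \<le> \<epsilon> / 2 * Suc n"
      using enumerate_blocks_estimates(2)[OF assms(1-3), where n = n] \<open>\<epsilon> > 0\<close> unfolding t_def r_def
      by (intro mult_left_mono of_nat_mono) auto
    finally have "norm (\<Sum>j\<le>n. E (block_of (r j)) (r j) *\<^sub>R x (r j)) / Suc n \<le> \<epsilon> / 2"
      by (simp add: pos_divide_le_eq)
    then have "norm (\<Sum>j\<le>n. E (block_of (r j)) (r j) *\<^sub>R x (r j)) / Suc n < \<epsilon>"
      using \<open>\<epsilon> > 0\<close> by linarith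
    then show ?case
      by simp
  qed
qed

end

section \<open>Signed tail sums bounded below\<close>

definition tail_lower_bound :: "(nat \<Rightarrow> 'a::real_normed_vector) \<Rightarrow> nat \<Rightarrow> real \<Rightarrow> bool" where
  "tail_lower_bound x n a \<longleftrightarrow> (\<exists>m. \<forall>F \<epsilon>. F \<subseteq> {m..} \<longrightarrow> card F = n \<longrightarrow> signs_on \<epsilon> F \<longrightarrow>
     a * n \<le> norm (\<Sum>i\<in>F. \<epsilon> i *\<^sub>R x i))"

lemma tail_lower_bound_0: "tail_lower_bound x 0 a"
  by (auto simp: tail_lower_bound_def)

lemma tail_lower_bound_mono: "tail_lower_bound x n b \<Longrightarrow> a \<le> b \<Longrightarrow> tail_lower_bound x n a"
  unfolding tail_lower_bound_def by (meson mult_right_mono of_nat_0_le_iff order_trans)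

lemma tail_lower_bound_1_le:
  assumes "tail_lower_bound x 1 a" "\<And>i. norm (x i) \<le> M"
  shows "a \<le> M"
proof -
  obtain m where m: "\<forall>F \<epsilon>. F \<subseteq> {m..} \<longrightarrow> card F = 1 \<longrightarrow> signs_on \<epsilon> F \<longrightarrow>
      a * real 1 \<le> norm (\<Sum>i\<in>F. \<epsilon> i *\<^sub>R x i)"
    using assms(1) unfolding tail_lower_bound_def by blast
  have "a * real 1 \<le> norm (\<Sum>i\<in>{m}. (\<lambda>_. 1::real) i *\<^sub>R x i)"
    by (intro m[rule_format]) auto
  then show ?thesis
    using assms(2)[of m] by simp
qed

lemma obtain_small_signed_sums:
  assumes "\<not> tail_lower_bound x n a"
  obtains F E where "\<And>m. F m \<subseteq> {m..}" "\<And>m. card (F m) = n" "\<And>m. signs_on (E m) (F m)"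
    "\<And>m. norm (\<Sum>i\<in>F m. E m i *\<^sub>R x i) < a * n"
proof -
  have "\<forall>m. \<exists>F E. F \<subseteq> {m..} \<and> card F = n \<and> signs_on E F \<and> norm (\<Sum>i\<in>F. E i *\<^sub>R x i) < a * n"
    using assms unfolding tail_lower_bound_def by (auto simp: not_le)
  then show thesis
    using that by metis
qed

lemma obtain_tail_starts:
  assumes "\<And>n. tail_lower_bound x n a"
  obtains W where "\<And>n F \<epsilon>. F \<subseteq> {W n..} \<Longrightarrow> card F = n \<Longrightarrow> signs_on \<epsilon> F \<Longrightarrow>
    a * n \<le> norm (\<Sum>i\<in>F. \<epsilon> i *\<^sub>R x i)"
proof -
  from assms have "\<forall>n. \<exists>m. \<forall>F \<epsilon>. F \<subseteq> {m..} \<longrightarrow> card F = n \<longrightarrow> signs_on \<epsilon> F \<longrightarrow>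
      a * n \<le> norm (\<Sum>i\<in>F. \<epsilon> i *\<^sub>R x i)"
    unfolding tail_lower_bound_def by blast
  from choice[OF this] show thesis
    using that by blast
qed

lemma almost_optimal_tail_lower_bound:
  fixes x :: "nat \<Rightarrow> 'a::real_normed_vector"
  assumes "\<And>i. norm (x i) \<le> M" "c > 0" "\<And>n. tail_lower_bound x n c" "\<tau> > 0"
  obtains hi lo p where "hi > 0" "(1 - \<tau>) * hi \<le> lo"
    "\<And>n. tail_lower_bound x n lo" "\<not> tail_lower_bound x p hi"
proof -
  define \<Gamma> where "\<Gamma> = {a. \<forall>n. tail_lower_bound x n a}"
  have "c \<in> \<Gamma>"
    using assms(3) by (simp add: \<Gamma>_def)
  have bdd: "bdd_above \<Gamma>"
  proof (rule bdd_aboveI)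
    fix a assume "a \<in> \<Gamma>"
    then show "a \<le> M"
      using tail_lower_bound_1_le[of x a M] assms(1) by (simp add: \<Gamma>_def)
  qed
  define \<gamma> where "\<gamma> = Sup \<Gamma>"
  have "c \<le> \<gamma>"
    unfolding \<gamma>_def using \<open>c \<in> \<Gamma>\<close> bdd by (rule cSup_upper)
  define \<eta> where "\<eta> = \<tau> * \<gamma> / 2"
  have "\<eta> > 0"
    using \<open>c > 0\<close> \<open>c \<le> \<gamma>\<close> \<open>\<tau> > 0\<close> by (simp add: \<eta>_def)
  then obtain a where "a \<in> \<Gamma>" "\<gamma> - \<eta> < a"
    using less_cSup_iff[of \<Gamma> "\<gamma> - \<eta>"] \<open>c \<in> \<Gamma>\<close> bdd unfolding \<gamma>_def by auto
  then have lo: "tail_lower_bound x n (\<gamma> - \<eta>)" for n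
    by (auto simp: \<Gamma>_def intro: tail_lower_bound_mono)
  have "\<gamma> + \<eta> \<notin> \<Gamma>"
    using cSup_upper[OF _ bdd, of "\<gamma> + \<eta>"] \<open>\<eta> > 0\<close> unfolding \<gamma>_def by auto
  then obtain p where hi: "\<not> tail_lower_bound x p (\<gamma> + \<eta>)"
    by (auto simp: \<Gamma>_def)
  have "(1 - \<tau>) * (\<gamma> + \<eta>) = \<gamma> - \<eta> - \<tau> * \<eta>"
    by (simp add: \<eta>_def field_simps)
  moreover have "\<tau> * \<eta> > 0"
    using \<open>\<tau> > 0\<close> \<open>\<eta> > 0\<close> by simp
  ultimately show thesis
    using that[OF _ _ lo hi] \<open>c > 0\<close> \<open>c \<le> \<gamma>\<close> \<open>\<eta> > 0\<close> by linarith
qed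

lemma schreier_lower_bound_of_blocks:
  fixes x :: "nat \<Rightarrow> 'a::real_normed_vector"
  assumes "hi > 0" "\<And>n. tail_lower_bound x n lo" "\<not> tail_lower_bound x p hi"
  shows "\<exists>y :: nat \<Rightarrow> 'a. (\<forall>j. norm (y j) \<le> 1) \<and> schreier_lower_bound y (lo / hi)"
proof -
  have "p > 0"
    using assms(3) tail_lower_bound_0 by (cases p) auto
  obtain F E where F: "\<And>m. F m \<subseteq> {m..}" "\<And>m. card (F m) = p" "\<And>m. signs_on (E m) (F m)"
    and small: "\<And>m. norm (\<Sum>i\<in>F m. E m i *\<^sub>R x i) < hi * p"
    using obtain_small_signed_sums[OF assms(3)] by blast
  obtain W where W: "\<And>n U \<sigma>. U \<subseteq> {W n..} \<Longrightarrow> card U = n \<Longrightarrow> signs_on \<sigma> U \<Longrightarrow>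
      lo * n \<le> norm (\<Sum>i\<in>U. \<sigma> i *\<^sub>R x i)"
    using obtain_tail_starts[OF assms(2)] by blast
  have "finite (F m)" "F m \<noteq> {}" for m
    using F(2)[of m] \<open>p > 0\<close> by (auto intro: card_ge_0_finite)
  interpret block_sequence "\<lambda>t. F" "\<lambda>k. W (k * p)"
    using F(1) \<open>\<And>m. finite (F m)\<close> \<open>\<And>m. F m \<noteq> {}\<close> by unfold_locales auto
  define y where "y j = (1 / (hi * p)) *\<^sub>R (\<Sum>i\<in>block j. E (start j) i *\<^sub>R x i)" for j
  have "norm (y j) \<le> 1" for j
  proof -
    have "norm (y j) = 1 / (hi * p) * norm (\<Sum>i\<in>block j. E (start j) i *\<^sub>R x i)"
      using \<open>hi > 0\<close> by (simp add: y_def)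
    also have "\<dots> \<le> 1 / (hi * p) * (hi * p)"
      using small[of "start j"] \<open>hi > 0\<close> by (intro mult_left_mono) auto
    also have "\<dots> = 1"
      using \<open>hi > 0\<close> \<open>p > 0\<close> by simp
    finally show ?thesis .
  qed
  moreover have "schreier_lower_bound y (lo / hi)"
    unfolding schreier_lower_bound_def
  proof (intro allI impI)
    fix G s assume G: "schreier_set G" "signs_on s G"
    have "lo * (card G * p) \<le> norm (\<Sum>j\<in>G. s j *\<^sub>R (\<Sum>i\<in>block j. E (start j) i *\<^sub>R x i))"
      using F(2,3) G by (intro schreier_sum_of_blocks_ge W) auto
    then have "1 / (hi * p) * (lo * (card G * p))
        \<le> 1 / (hi * p) * norm (\<Sum>j\<in>G. s j *\<^sub>R (\<Sum>i\<in>block j. E (start j) i *\<^sub>R x i))"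
      using \<open>hi > 0\<close> by (intro mult_left_mono) auto
    also have "\<dots> = norm ((1 / (hi * p)) *\<^sub>R (\<Sum>j\<in>G. s j *\<^sub>R (\<Sum>i\<in>block j. E (start j) i *\<^sub>R x i)))"
      using \<open>hi > 0\<close> by simp
    also have "(1 / (hi * p)) *\<^sub>R (\<Sum>j\<in>G. s j *\<^sub>R (\<Sum>i\<in>block j. E (start j) i *\<^sub>R x i))
        = (\<Sum>j\<in>G. s j *\<^sub>R y j)"
      by (simp add: y_def scaleR_sum_right)
    finally show "lo / hi * card G \<le> norm (\<Sum>j\<in>G. s j *\<^sub>R y j)"
      using \<open>p > 0\<close> by simp
  qed
  ultimately show ?thesis
    by (intro exI[of _ y]) blast
qed

lemma schreier_sequence_of_tail_lower_bound:
  fixes x :: "nat \<Rightarrow> 'a::real_normed_vector"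
  assumes "\<And>i. norm (x i) \<le> M" "c > 0" "\<And>n. tail_lower_bound x n c" "\<tau> > 0"
  obtains y :: "nat \<Rightarrow> 'a" where "\<And>j. norm (y j) \<le> 1" "schreier_lower_bound y (1 - \<tau>)"
proof -
  obtain hi lo p where "hi > 0" "(1 - \<tau>) * hi \<le> lo"
    and lo: "\<And>n. tail_lower_bound x n lo" and hi: "\<not> tail_lower_bound x p hi"
    using almost_optimal_tail_lower_bound[OF assms] by blast
  then have "1 - \<tau> \<le> lo / hi"
    by (simp add: le_divide_eq)
  obtain y :: "nat \<Rightarrow> 'a" where "\<forall>j. norm (y j) \<le> 1" "schreier_lower_bound y (lo / hi)"
    using schreier_lower_bound_of_blocks[OF \<open>hi > 0\<close> lo hi] by blast
  moreover from this(2) have "schreier_lower_bound y (1 - \<tau>)"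
    by (rule schreier_lower_bound_mono) fact
  ultimately show thesis
    using that by blast
qed

section \<open>Signed averages tending to zero\<close>

text \<open>Blocks of level \<open>lev t\<close> have \<open>N (lev t)\<close> terms; the bound makes the last, partially summed block
  negligible compared to the \<open>t\<close> complete blocks before it.\<close>

lemma slowly_growing_levels:
  fixes N :: "nat \<Rightarrow> nat"
  obtains lev :: "nat \<Rightarrow> nat" where "filterlim lev at_top sequentially"
    "\<And>t. (lev t + 1) * N (lev t) \<le> t + 1 + N 0"
proof -
  define P where "P t k \<longleftrightarrow> k \<le> t \<and> (k = 0 \<or> (k + 1) * N k \<le> t + 1)" for t k
  define lev where "lev t = (GREATEST k. P t k)" for t
  have P_lev: "P t (lev t)" for t
    unfolding lev_def by (rule GreatestI_nat[of _ 0 t]) (auto simp: P_def)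
  have le_lev: "P t k \<Longrightarrow> k \<le> lev t" for t k
    unfolding lev_def by (rule Greatest_le_nat[of _ _ t]) (auto simp: P_def)
  have "eventually (\<lambda>t. K \<le> lev t) sequentially" for K
    unfolding eventually_sequentially
    by (intro exI[of _ "K + (K + 1) * N K"] allI impI le_lev) (auto simp: P_def)
  then have "filterlim lev at_top sequentially"
    by (simp add: filterlim_at_top)
  moreover have "(lev t + 1) * N (lev t) \<le> t + 1 + N 0" for t
    using P_lev[of t] by (cases "lev t = 0") (auto simp: P_def)
  ultimately show thesis
    by (rule that)
qed

lemma eventually_weighted_sum_le:
  fixes a w :: "nat \<Rightarrow> real"
  assumes "\<And>s. 0 \<le> a s" "\<And>s. 0 \<le> w s" "\<And>s. w s \<le> 1" "w \<longlonglongrightarrow> 0"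
    and "filterlim (\<lambda>t. \<Sum>s<t. a s) at_top sequentially" "\<epsilon> > 0"
  shows "eventually (\<lambda>t. (\<Sum>s<t. a s * w s) \<le> \<epsilon> * (\<Sum>s<t. a s)) sequentially"
proof -
  obtain T where T: "\<forall>s\<ge>T. norm (w s - 0) < \<epsilon> / 2"
    using LIMSEQ_D[OF assms(4), of "\<epsilon> / 2"] \<open>\<epsilon> > 0\<close> by auto
  have bound: "(\<Sum>s<t. a s * w s) \<le> (\<Sum>s<T. a s) + \<epsilon> / 2 * (\<Sum>s<t. a s)" for t
  proof -
    have "(\<Sum>s<t. a s * w s) \<le> (\<Sum>s<t. (if s < T then a s else 0) + \<epsilon> / 2 * a s)"
    proof (rule sum_mono)
      fix s
      have "a s * w s \<le> a s * 1"
        using assms(1-3) by (intro mult_left_mono) auto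
      moreover have "a s * w s \<le> a s * (\<epsilon> / 2)" if "T \<le> s"
        using assms(1) T that by (intro mult_left_mono) auto
      moreover have "0 \<le> \<epsilon> / 2 * a s"
        using assms(1) \<open>\<epsilon> > 0\<close> by simp
      ultimately show "a s * w s \<le> (if s < T then a s else 0) + \<epsilon> / 2 * a s"
        by (cases "s < T") (auto simp: mult.commute)
    qed
    also have "(\<Sum>s<t. (if s < T then a s else 0) + \<epsilon> / 2 * a s)
        = (\<Sum>s\<in>{..<t} \<inter> {..<T}. a s) + \<epsilon> / 2 * (\<Sum>s<t. a s)"
      by (simp add: sum.distrib sum_distrib_left sum.inter_restrict)
    also have "(\<Sum>s\<in>{..<t} \<inter> {..<T}. a s) \<le> (\<Sum>s<T. a s)"
      using assms(1) by (intro sum_mono2) auto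
    finally show ?thesis
      by simp
  qed
  have "eventually (\<lambda>t. 2 / \<epsilon> * (\<Sum>s<T. a s) \<le> (\<Sum>s<t. a s)) sequentially"
    using assms(5) by (simp add: filterlim_at_top)
  then show ?thesis
  proof eventually_elim
    case (elim t)
    then have "(\<Sum>s<T. a s) \<le> \<epsilon> / 2 * (\<Sum>s<t. a s)"
      using \<open>\<epsilon> > 0\<close> by (simp add: field_simps)
    then show ?case
      using bound[of t] by linarith
  qed
qed

lemma eventually_le_of_slow_levels:
  fixes b :: "nat \<Rightarrow> real" and M \<epsilon> :: real
  assumes "filterlim lev at_top sequentially" "\<And>t. 0 \<le> b t"
    and "\<And>t. (real (lev t) + 1) * b t \<le> real t + C" "M \<ge> 0" "\<epsilon> > 0"
  shows "eventually (\<lambda>t. M * b t \<le> \<epsilon> * t) sequentially"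
proof -
  obtain K :: nat where "2 * M / \<epsilon> \<le> K"
    using real_arch_simple by blast
  then have "2 * M \<le> \<epsilon> * K"
    using \<open>\<epsilon> > 0\<close> by (simp add: pos_divide_le_eq mult.commute)
  then have K: "2 * M \<le> \<epsilon> * (real K + 1)"
    using \<open>\<epsilon> > 0\<close> by (simp add: algebra_simps)
  have "eventually (\<lambda>t. K \<le> lev t) sequentially"
    using assms(1) by (simp add: filterlim_at_top)
  moreover have "eventually (\<lambda>t. C \<le> real t) sequentially"
    using eventually_ge_at_top[of "nat \<lceil>C\<rceil>"]
    by eventually_elim (meson real_nat_ceiling_ge of_nat_le_iff order_trans)
  ultimately show ?thesis
  proof eventually_elim
    case (elim t)
    have "(real K + 1) * b t \<le> (real (lev t) + 1) * b t"
      using elim assms(2)[of t] by (intro mult_right_mono) auto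
    also have "\<dots> \<le> 2 * t"
      using assms(3)[of t] elim by linarith
    finally have "(real K + 1) * b t \<le> 2 * t" .
    then have "(real K + 1) * (M * b t) \<le> M * (2 * t)"
      using \<open>M \<ge> 0\<close> by (simp add: mult.left_commute mult_left_mono)
    also have "\<dots> \<le> (real K + 1) * (\<epsilon> * t)"
      using mult_right_mono[OF K, of "real t"] by (simp add: algebra_simps)
    finally show ?case
      by (simp add: mult_le_cancel_left_pos)
  qed
qed

lemma eventually_block_errors_le:
  fixes N lev :: "nat \<Rightarrow> nat" and M \<epsilon> :: real
  assumes lev: "filterlim lev at_top sequentially" "\<And>t. (lev t + 1) * N (lev t) \<le> t + 1 + N 0"
    and "\<And>k. N k > 0" "M \<ge> 0" "\<epsilon> > 0"
  shows "eventually (\<lambda>t. (\<Sum>s<t. real (N (lev s)) / (real (lev s) + 1)) + M * N (lev t)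
    \<le> \<epsilon> * (\<Sum>s<t. real (N (lev s)))) sequentially"
proof -
  define L where "L t = (\<Sum>s<t. real (N (lev s)))" for t
  have L_ge: "real t \<le> L t" for t
    using sum_mono[of "{..<t}" "\<lambda>_. 1::real" "\<lambda>s. real (N (lev s))"] assms(3) by (simp add: L_def Suc_le_eq)
  then have "filterlim L at_top sequentially"
    by (auto intro: filterlim_at_top_mono[OF filterlim_real_sequentially])
  moreover have "(\<lambda>s. 1 / (real (lev s) + 1)) \<longlonglongrightarrow> 0"
    using filterlim_compose[OF LIMSEQ_inverse_real_of_nat lev(1)] by (simp add: inverse_eq_divide add.commute)
  ultimately have "eventually (\<lambda>t. (\<Sum>s<t. N (lev s) * (1 / (real (lev s) + 1))) \<le> \<epsilon> / 2 * L t) sequentially"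
    unfolding L_def using \<open>\<epsilon> > 0\<close> by (intro eventually_weighted_sum_le) auto
  moreover have "eventually (\<lambda>t. M * N (lev t) \<le> \<epsilon> / 2 * t) sequentially"
  proof (rule eventually_le_of_slow_levels[OF lev(1), where b = "\<lambda>t. real (N (lev t))" and C = "1 + real (N 0)"])
    show "(real (lev t) + 1) * real (N (lev t)) \<le> real t + (1 + real (N 0))" for t
    proof -
      have "real ((lev t + 1) * N (lev t)) \<le> real (t + 1 + N 0)"
        using lev(2)[of t] by (simp only: of_nat_le_iff)
      then show ?thesis
        by (simp add: algebra_simps)
    qed
  qed (use \<open>M \<ge> 0\<close> \<open>\<epsilon> > 0\<close> in auto)
  ultimately show ?thesis
  proof eventually_elim
    case (elim t)
    moreover have "\<epsilon> / 2 * t \<le> \<epsilon> / 2 * L t"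
      using L_ge[of t] \<open>\<epsilon> > 0\<close> by (intro mult_left_mono) auto
    ultimately show ?case
      by (simp add: L_def)
  qed
qed

lemma obtain_small_signed_sums_all_levels:
  fixes x :: "nat \<Rightarrow> 'a::real_normed_vector"
  assumes "\<And>c. c > 0 \<Longrightarrow> \<exists>n. \<not> tail_lower_bound x n c"
  obtains N F E where "\<And>k. N k > 0" "\<And>k m. F k m \<subseteq> {m..}" "\<And>k m. card (F k m) = N k"
    "\<And>k m. signs_on (E k m) (F k m)"
    "\<And>k m. norm (\<Sum>i\<in>F k m. E k m i *\<^sub>R x i) < N k / (real k + 1)"
proof -
  have "\<exists>n F E. \<forall>m. F m \<subseteq> {m..} \<and> card (F m) = n \<and> signs_on (E m) (F m) \<and>
      norm (\<Sum>i\<in>F m. E m i *\<^sub>R x i) < 1 / (real k + 1) * n" for k :: nat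
  proof -
    obtain n where n: "\<not> tail_lower_bound x n (1 / (real k + 1))"
      using assms[of "1 / (real k + 1)"] by auto
    obtain F E where "\<And>m. F m \<subseteq> {m..}" "\<And>m. card (F m) = n" "\<And>m. signs_on (E m) (F m)"
      "\<And>m. norm (\<Sum>i\<in>F m. E m i *\<^sub>R x i) < 1 / (real k + 1) * n"
      using obtain_small_signed_sums[OF n] by blast
    then show ?thesis
      by (intro exI[of _ n] exI[of _ F] exI[of _ E]) auto
  qed
  then have "\<forall>k. \<exists>n F E. \<forall>m. F m \<subseteq> {m..} \<and> card (F m) = n \<and> signs_on (E m) (F m) \<and>
      norm (\<Sum>i\<in>F m. E m i *\<^sub>R x i) < 1 / (real k + 1) * n"
    by blast
  from choice[OF this] obtain N where "\<forall>k. \<exists>F E. \<forall>m. F m \<subseteq> {m..} \<and> card (F m) = N k \<and>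
      signs_on (E m) (F m) \<and> norm (\<Sum>i\<in>F m. E m i *\<^sub>R x i) < 1 / (real k + 1) * N k"
    by blast
  from choice[OF this] obtain F where "\<forall>k. \<exists>E. \<forall>m. F k m \<subseteq> {m..} \<and> card (F k m) = N k \<and>
      signs_on (E m) (F k m) \<and> norm (\<Sum>i\<in>F k m. E m i *\<^sub>R x i) < 1 / (real k + 1) * N k"
    by blast
  from choice[OF this] obtain E where "\<forall>k m. F k m \<subseteq> {m..} \<and> card (F k m) = N k \<and>
      signs_on (E k m) (F k m) \<and> norm (\<Sum>i\<in>F k m. E k m i *\<^sub>R x i) < 1 / (real k + 1) * N k"
    by blast
  then have F: "\<And>k m. F k m \<subseteq> {m..}" "\<And>k m. card (F k m) = N k"
      "\<And>k m. signs_on (E k m) (F k m)" "\<And>k m. norm (\<Sum>i\<in>F k m. E k m i *\<^sub>R x i) < N k / (real k + 1)"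
    by auto
  have N_pos: "N k > 0" for k
    using F(4)[of k 0] by (cases "N k") auto
  show thesis
    by (rule that[OF N_pos F])
qed

lemma signed_averages_tendsto_zero:
  fixes x :: "nat \<Rightarrow> 'a::real_normed_vector"
  assumes M: "\<And>i. norm (x i) \<le> M" and no_bound: "\<And>c. c > 0 \<Longrightarrow> \<exists>n. \<not> tail_lower_bound x n c"
  obtains r eps where "strict_mono r" "\<forall>j. eps j \<in> {-1, 1::real}"
    "(\<lambda>n. (1 / real (Suc n)) *\<^sub>R (\<Sum>j\<le>n. eps j *\<^sub>R x (r j))) \<longlonglongrightarrow> 0"
proof -
  have "M \<ge> 0"
    using M[of 0] norm_ge_zero order_trans by blast
  obtain N F E where N_pos: "\<And>k. N k > 0" and F: "\<And>k m. F k m \<subseteq> {m..}" "\<And>k m. card (F k m) = N k"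
    "\<And>k m. signs_on (E k m) (F k m)" "\<And>k m. norm (\<Sum>i\<in>F k m. E k m i *\<^sub>R x i) < N k / (real k + 1)"
    using obtain_small_signed_sums_all_levels[OF no_bound] by blast
  obtain lev where lev: "filterlim lev at_top sequentially" "\<And>t. (lev t + 1) * N (lev t) \<le> t + 1 + N 0"
    using slowly_growing_levels by blast
  have "finite (F k m)" "F k m \<noteq> {}" for k m
    using F(2)[of k m] N_pos[of k] by (auto intro: card_ge_0_finite)
  then interpret block_sequence "\<lambda>t. F (lev t)" "\<lambda>_. 0"
    using F(1) by unfold_locales auto
  define r where "r = enumerate (\<Union>t. block t)"
  define eps where "eps j = E (lev (block_of (r j))) (start (block_of (r j))) (r j)" for j
  have "(\<lambda>n. (1 / real (Suc n)) *\<^sub>R (\<Sum>j\<le>n. eps j *\<^sub>R x (r j))) \<longlonglongrightarrow> 0"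
    unfolding eps_def r_def
  proof (rule enumerate_blocks_averages_tendsto_zero[where b = "\<lambda>t. N (lev t) / (real (lev t) + 1)"])
    show "eventually (\<lambda>t. (\<Sum>s<t. N (lev s) / (real (lev s) + 1)) + M * real (card (block t))
        \<le> \<epsilon> * real (\<Sum>s<t. card (block s))) sequentially" if "\<epsilon> > 0" for \<epsilon>
      using eventually_block_errors_le[OF lev N_pos \<open>M \<ge> 0\<close> that] F(2) by simp
  qed (use M F(3,4) in \<open>auto intro: less_imp_le\<close>)
  moreover have "strict_mono r"
    unfolding r_def by (rule strict_mono_enumerate[OF infinite_UN_blocks])
  moreover have "eps j \<in> {-1, 1}" for j
    unfolding eps_def r_def using F(3) by (rule signs_on_enumerate_blocks)
  ultimately show thesis
    using that by blast
qed

section \<open>Failure of the alternating Banach-Saks property\<close>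

lemma uniform_tail_lower_bound_if_not_alternating_banach_saks:
  assumes "\<not> alternating_banach_saks TYPE('a::banach)"
  obtains x :: "nat \<Rightarrow> 'a::banach" and M c where "\<And>i. norm (x i) \<le> M" "c > 0" "\<And>n. tail_lower_bound x n c"
proof -
  obtain x :: "nat \<Rightarrow> 'a" where "bounded (range x)" and no_convergent_averages:
    "\<not> (\<exists>r eps. strict_mono r \<and> (\<forall>j. eps j \<in> {-1, 1::real}) \<and>
       convergent (\<lambda>n. (1 / real (Suc n)) *\<^sub>R (\<Sum>j\<le>n. eps j *\<^sub>R x (r j))))"
    using assms unfolding alternating_banach_saks_def by blast
  then obtain M where M: "\<And>i. norm (x i) \<le> M"
    by (auto simp: bounded_iff)
  have "\<exists>c>0. \<forall>n. tail_lower_bound x n c"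
  proof (rule ccontr)
    assume "\<not> (\<exists>c>0. \<forall>n. tail_lower_bound x n c)"
    then have "\<And>c. c > 0 \<Longrightarrow> \<exists>n. \<not> tail_lower_bound x n c"
      by blast
    then obtain r eps where "strict_mono r" "\<forall>j. eps j \<in> {-1, 1::real}"
      "(\<lambda>n. (1 / real (Suc n)) *\<^sub>R (\<Sum>j\<le>n. eps j *\<^sub>R x (r j))) \<longlonglongrightarrow> 0"
      using signed_averages_tendsto_zero[where x = x, OF M] by blast
    with no_convergent_averages show False
      by (blast intro: convergentI)
  qed
  then show thesis
    using that M by blast
qed

lemma distortion_parameter_exists:
  fixes e :: real
  assumes "e > 0"
  obtains \<tau> where "\<tau> > 0" "3 * \<tau> < 1" "1 / (1 - 3 * \<tau>) < 1 + e"
proof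
  define \<tau> where "\<tau> = e / (6 * (1 + e))"
  show "\<tau> > 0"
    using \<open>e > 0\<close> by (simp add: \<tau>_def)
  have lam: "1 - 3 * \<tau> = (2 + e) / (2 * (1 + e))"
    using \<open>e > 0\<close> by (simp add: \<tau>_def field_simps)
  moreover have "(2 + e) / (2 * (1 + e)) > 0"
    using \<open>e > 0\<close> by simp
  ultimately show "3 * \<tau> < 1"
    by linarith
  have "(1 + e) * 2 < (1 + e) * (2 + e)"
    using \<open>e > 0\<close> by (intro mult_strict_left_mono) auto
  then show "1 / (1 - 3 * \<tau>) < 1 + e"
    unfolding lam using \<open>e > 0\<close> by (simp add: divide_less_eq mult.commute)
qed

theorem proposition3p5:
  assumes "\<not> alternating_banach_saks TYPE('a::banach)"
    and "(e::real) > 0"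
  shows "\<exists>f :: nat set \<Rightarrow> 'a. bi_lipschitz_GN f \<and> lip_f f * lip_finv f < 1 + e"
proof -
  obtain x :: "nat \<Rightarrow> 'a" and M c where x: "\<And>i. norm (x i) \<le> M" "c > 0" "\<And>n. tail_lower_bound x n c"
    using uniform_tail_lower_bound_if_not_alternating_banach_saks[OF assms(1)] by blast
  obtain \<tau> where \<tau>: "\<tau> > 0" "3 * \<tau> < 1" "1 / (1 - 3 * \<tau>) < 1 + e"
    using distortion_parameter_exists[OF assms(2)] by blast
  obtain y :: "nat \<Rightarrow> 'a" where "\<And>j. norm (y j) \<le> 1" "schreier_lower_bound y (1 - \<tau>)"
    using schreier_sequence_of_tail_lower_bound[where x = x, OF x \<open>\<tau> > 0\<close>] by blast
  then obtain f :: "nat set \<Rightarrow> 'a" where "bi_lipschitz_GN f" "lip_f f * lip_finv f \<le> 1 / (1 - 3 * \<tau>)"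
    using embedding_of_schreier_lower_bound \<tau>(1,2) by blast
  with \<tau>(3) show ?thesis
    by (intro exI[of _ f]) auto
qed

end
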